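(* Consider two groups of binary agents and the round-robin procedure in which, while goods remain, group $1$ picks one remaining good and then group $2$ picks one remaining good. Then: (a) group $1$ has a picking strategy such that, whatever goods group $2$ picks, the final allocation is envy-free for at least half of the agents of group $1$; (b) group $2$ has a picking strategy such that, whatever goods group $1$ picks, the final allocation is EF1 (equivalently, MMS-fair) for at least half of the agents of group $2$.
   Context: There is a finite set $G$ of goods and two groups $A_1,A_2$ of agents. A binary agent has an additive utility with $u_a(\{g\})\in\{0,1\}$. The round-robin procedure produces a partition $(G_1,G_2)$ of $G$, $G_i$ being the goods picked by group $i$; agents of $A_i$ get $u_a(G_i)$. For $a\in A_i$ the allocation is envy-free for $a$ if $u_a(G_i)\ge u_a(G_{3-i})$, and EF1 for $a$ if there is $C\subseteq G_{3-i}$, $|C|\le1$, with $u_a(G_i)\ge u_a(G_{3-i}\setminus C)$. It is MMS-fair for $a$ if $u_a(G_i)\ge\max\min(u_a(P_1),u_a(P_2))$ over all partitions $(P_1,P_2)$ of $G$. *)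

theory Defs
  imports Main
begin

definition uset :: "('a \<Rightarrow> 'g \<Rightarrow> nat) \<Rightarrow> 'a \<Rightarrow> 'g set \<Rightarrow> nat" where
  "uset u a S = (\<Sum>g\<in>S. u a g)"

definition binary_agents :: "('a \<Rightarrow> 'g \<Rightarrow> nat) \<Rightarrow> 'a set \<Rightarrow> bool" where
  "binary_agents u A \<longleftrightarrow> (\<forall>a\<in>A. \<forall>g. u a g \<le> 1)"

text \<open>A play of the round-robin procedure is a list of the picked goods in order;
  positions 0,2,4,... are picks of group 1 and positions 1,3,5,... of group 2.
  A complete play picks every good exactly once.\<close>
definition complete_play :: "'g set \<Rightarrow> 'g list \<Rightarrow> bool" where
  "complete_play G p \<longleftrightarrow> distinct p \<and> set p = G"

definition picked_by1 :: "'g list \<Rightarrow> 'g set" where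
  "picked_by1 p = {p ! i | i. i < length p \<and> even i}"

definition picked_by2 :: "'g list \<Rightarrow> 'g set" where
  "picked_by2 p = {p ! i | i. i < length p \<and> odd i}"

text \<open>A strategy of group 1 acts on histories of even length, one of group 2 on histories of odd
  length; it is valid if it always picks a remaining good.\<close>
definition valid_strategy :: "'g set \<Rightarrow> (nat \<Rightarrow> bool) \<Rightarrow> ('g list \<Rightarrow> 'g) \<Rightarrow> bool" where
  "valid_strategy G turn s \<longleftrightarrow>
     (\<forall>h. distinct h \<and> set h \<subset> G \<and> turn (length h) \<longrightarrow> s h \<in> G - set h)"

definition follows :: "(nat \<Rightarrow> bool) \<Rightarrow> ('g list \<Rightarrow> 'g) \<Rightarrow> 'g list \<Rightarrow> bool" where
  "follows turn s p \<longleftrightarrow> (\<forall>i < length p. turn i \<longrightarrow> p ! i = s (take i p))"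

definition envy_free_for :: "('a \<Rightarrow> 'g \<Rightarrow> nat) \<Rightarrow> 'a \<Rightarrow> 'g set \<Rightarrow> 'g set \<Rightarrow> bool" where
  "envy_free_for u a Own Other \<longleftrightarrow> uset u a Own \<ge> uset u a Other"

definition EF1_for :: "('a \<Rightarrow> 'g \<Rightarrow> nat) \<Rightarrow> 'a \<Rightarrow> 'g set \<Rightarrow> 'g set \<Rightarrow> bool" where
  "EF1_for u a Own Other \<longleftrightarrow>
     (\<exists>C. C \<subseteq> Other \<and> card C \<le> 1 \<and> uset u a Own \<ge> uset u a (Other - C))"

definition MMS_value :: "('a \<Rightarrow> 'g \<Rightarrow> nat) \<Rightarrow> 'a \<Rightarrow> 'g set \<Rightarrow> nat" where
  "MMS_value u a G = Max {min (uset u a P1) (uset u a P2) | P1 P2. P1 \<union> P2 = G \<and> P1 \<inter> P2 = {}}"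

definition MMS_fair_for :: "('a \<Rightarrow> 'g \<Rightarrow> nat) \<Rightarrow> 'a \<Rightarrow> 'g set \<Rightarrow> 'g set \<Rightarrow> bool" where
  "MMS_fair_for u a G Own \<longleftrightarrow> uset u a Own \<ge> MMS_value u a G"

end

theory Submission
  imports Defs
begin

text \<open>View the round-robin procedure as a finite two-player game in which a group wants the
  final pair of bundles to satisfy some property. Such games are determined. For the property
  ``at least half of the agents weakly prefer our bundle'' the first mover can force it by
  strategy stealing: otherwise the second mover could force ``more than half strictly prefer
  the other bundle''; this property only improves with an extra good, so the first mover could
  grab any good and then follow that strategy, and playing the two strategies against each other
  would make more than half of the agents strictly prefer each bundle to the other.
  For (b), group 2 answers group 1's first pick by playing this first-mover strategy on the
  remaining goods: every agent who weakly prefers its bundle is then envious by at most that one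
  good, and for binary utilities EF1 implies MMS-fairness.\<close>

text \<open>\<open>can_force P R X Y b\<close>: with the goods \<open>R\<close> left, the forcing player holding \<open>X\<close>, the
  opponent holding \<open>Y\<close>, and \<open>b\<close> true iff the forcing player is to move, the forcing player can
  ensure that the final bundles satisfy \<open>P\<close>.\<close>

inductive can_force :: "('g set \<Rightarrow> 'g set \<Rightarrow> bool) \<Rightarrow> 'g set \<Rightarrow> 'g set \<Rightarrow> 'g set \<Rightarrow> bool \<Rightarrow> bool"
  for P where
  finished: "P X Y \<Longrightarrow> can_force P {} X Y b"
| own_move: "g \<in> R \<Longrightarrow> can_force P (R - {g}) (insert g X) Y False \<Longrightarrow> can_force P R X Y True"
| opp_move: "R \<noteq> {} \<Longrightarrow> (\<And>g. g \<in> R \<Longrightarrow> can_force P (R - {g}) X (insert g Y) True)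
    \<Longrightarrow> can_force P R X Y False"

lemma can_force_finishedD: "can_force P {} X Y b \<Longrightarrow> P X Y"
  by (erule can_force.cases) auto

lemma can_force_own_moveD:
  "can_force P R X Y True \<Longrightarrow> R \<noteq> {} \<Longrightarrow> \<exists>g\<in>R. can_force P (R - {g}) (insert g X) Y False"
  by (erule can_force.cases) auto

lemma can_force_opp_moveD:
  "can_force P R X Y False \<Longrightarrow> g \<in> R \<Longrightarrow> can_force P (R - {g}) X (insert g Y) True"
  by (erule can_force.cases) auto

lemma can_force_mono:
  "can_force P R X Y b \<Longrightarrow> (\<And>X Y. P X Y \<Longrightarrow> P' X Y) \<Longrightarrow> can_force P' R X Y b"
  by (induction rule: can_force.induct) (auto intro: can_force.intros)

lemma can_force_determined:
  "finite R \<Longrightarrow> can_force P R X Y b \<or> can_force (\<lambda>Y X. \<not> P X Y) R Y X (\<not> b)"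
proof (induction R arbitrary: X Y b rule: finite_psubset_induct)
  case (psubset R)
  let ?P' = "\<lambda>Y X. \<not> P X Y"
  have IH: "can_force P (R - {g}) X Y b \<or> can_force ?P' (R - {g}) Y X (\<not> b)"
    if "g \<in> R" for g X Y b
    using psubset that by blast
  consider "R = {}" | "R \<noteq> {}" "b" | "R \<noteq> {}" "\<not> b" by blast
  then show ?case
  proof cases
    case 1
    then show ?thesis by (auto intro: can_force.finished)
  next
    case 2
    show ?thesis
    proof (cases "\<exists>g\<in>R. can_force P (R - {g}) (insert g X) Y False")
      case True
      then show ?thesis using \<open>b\<close> by (auto intro: can_force.own_move)
    next
      case False
      then have "can_force ?P' (R - {g}) Y (insert g X) True" if "g \<in> R" for g
        using IH[OF that, of "insert g X" Y False] that by auto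
      then show ?thesis using 2 by (auto intro: can_force.opp_move)
    qed
  next
    case 3
    show ?thesis
    proof (cases "\<forall>g\<in>R. can_force P (R - {g}) X (insert g Y) True")
      case True
      then show ?thesis using 3 by (auto intro: can_force.opp_move)
    next
      case False
      then obtain g where g: "g \<in> R" "\<not> can_force P (R - {g}) X (insert g Y) True" by blast
      then have "can_force ?P' (R - {g}) (insert g Y) X False"
        using IH[OF g(1), of X "insert g Y" True] by auto
      then show ?thesis using 3 g(1) by (auto intro: can_force.own_move)
    qed
  qed
qed

lemma can_force_against:
  "can_force P R X Y b \<Longrightarrow> can_force Q R Y X (\<not> b) \<Longrightarrow> \<exists>X' Y'. P X' Y' \<and> Q Y' X'"
proof (induction rule: can_force.induct)
  case (finished X Y b)
  then show ?case using can_force_finishedD by blast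
next
  case (own_move g R X Y)
  then show ?case using can_force_opp_moveD[of Q R Y X g] by auto
next
  case (opp_move R X Y)
  then show ?case using can_force_own_moveD[of Q R Y X] by auto
qed

lemma can_force_insert_opp:
  "can_force P R X Y b \<Longrightarrow> finite Y \<Longrightarrow> (\<And>X' Y'. finite Y' \<Longrightarrow> P X' Y' \<Longrightarrow> P' X' (insert x Y'))
   \<Longrightarrow> can_force P' R X (insert x Y) b"
proof (induction rule: can_force.induct)
  case (finished X Y b)
  then show ?case by (auto intro: can_force.finished)
next
  case (own_move g R X Y)
  then show ?case by (intro can_force.own_move[of g]) auto
next
  case (opp_move R X Y)
  then show ?case by (intro can_force.opp_move) (auto simp: insert_commute)
qed

text \<open>The finiteness side conditions are needed because \<open>uset\<close> of an infinite set is 0.\<close>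

definition bundle_monotone :: "('g set \<Rightarrow> 'g set \<Rightarrow> bool) \<Rightarrow> bool" where
  "bundle_monotone P \<longleftrightarrow>
     (\<forall>X Y X' Y'. P X Y \<longrightarrow> X \<subseteq> X' \<longrightarrow> finite X' \<longrightarrow> Y' \<subseteq> Y \<longrightarrow> finite Y \<longrightarrow> P X' Y')"

lemma bundle_monotoneD:
  "bundle_monotone P \<Longrightarrow> P X Y \<Longrightarrow> X \<subseteq> X' \<Longrightarrow> finite X' \<Longrightarrow> Y' \<subseteq> Y \<Longrightarrow> finite Y \<Longrightarrow> P X' Y'"
  unfolding bundle_monotone_def by blast

lemma can_force_singleton:
  assumes "can_force P {e} X Y b" "finite X" "finite Y"
    and mono: "bundle_monotone P"
  shows "P (insert e X) Y"
proof -
  have "P (insert e X) Y \<or> P X (insert e Y)"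
  proof (cases b)
    case True
    then show ?thesis
      using can_force_own_moveD[of P "{e}" X Y] assms(1) by (auto dest: can_force_finishedD)
  next
    case False
    then show ?thesis
      using can_force_opp_moveD[of P "{e}" X Y e] assms(1) by (auto dest: can_force_finishedD)
  qed
  then show ?thesis
    using bundle_monotoneD[OF mono, of X "insert e Y" "insert e X" Y] assms(2,3) by auto
qed

lemma can_force_extra_good:
  assumes "can_force P R' X Y b" "R' = insert e R" "e \<notin> R" "finite R" "finite X" "finite Y"
    and mono: "bundle_monotone P"
  shows "can_force P R (insert e X) Y b"
  using assms(1-6)
proof (induction arbitrary: R e rule: can_force.induct)
  case (finished X Y b)
  then show ?case by simp
next
  case (own_move g R' X Y)
  show ?case
  proof (cases "R = {}")
    case True
    then have "can_force P {e} X Y True"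
      using can_force.own_move[OF own_move.hyps(1,2)] own_move.prems(1) by simp
    then have "P (insert e X) Y"
      by (rule can_force_singleton[OF _ _ _ mono]) (use own_move.prems in auto)
    with True show ?thesis by (simp add: can_force.finished)
  next
    case False
    txt \<open>If the strategy picks \<open>e\<close>, which we already own, pick any other remaining good.\<close>
    then obtain y where y: "y \<in> R" and "g \<noteq> e \<Longrightarrow> y = g"
      using own_move.hyps(1) own_move.prems(1) by blast
    then have "R' - {g} = insert (if g = e then y else e) (R - {y})"
      using own_move.prems(1,2) by auto
    then have "can_force P (R - {y}) (insert (if g = e then y else e) (insert g X)) Y False"
      by (rule own_move.IH) (use own_move.prems y in auto)
    then have "can_force P (R - {y}) (insert y (insert e X)) Y False"
      using \<open>g \<noteq> e \<Longrightarrow> y = g\<close> by (cases "g = e") (auto simp: insert_commute)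
    then show ?thesis using y by (rule can_force.own_move[rotated])
  qed
next
  case (opp_move R' X Y)
  show ?case
  proof (cases "R = {}")
    case True
    then have "can_force P {e} X Y False"
      using can_force.opp_move[OF opp_move.hyps(1,2)] opp_move.prems(1) by simp
    then have "P (insert e X) Y"
      by (rule can_force_singleton[OF _ _ _ mono]) (use opp_move.prems in auto)
    with True show ?thesis by (simp add: can_force.finished)
  next
    case False
    have moves: "can_force P (R - {g}) (insert e X) (insert g Y) True" if "g \<in> R" for g
    proof -
      have g: "g \<in> R'" and eq: "R' - {g} = insert e (R - {g})"
        using that opp_move.prems(1,2) by auto
      from eq show ?thesis by (rule opp_move.IH[OF g]) (use opp_move.prems in auto)
    qed
    show ?thesis using False moves by (rule can_force.opp_move)
  qed
qed

lemma can_force_second_imp_first: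
  assumes "can_force P R X Y False" "finite R" "finite X" "finite Y"
    and mono: "bundle_monotone P"
  shows "can_force P R X Y True"
proof (cases "R = {}")
  case True
  then show ?thesis using assms(1) by (auto dest: can_force_finishedD intro: can_force.finished)
next
  case False
  then obtain x where x: "x \<in> R" by blast
  then have "can_force P (R - {x}) (insert x X) Y False"
    using assms by (intro can_force_extra_good[where R' = R]) auto
  with x show ?thesis by (rule can_force.own_move)
qed

definition picks :: "(nat \<Rightarrow> bool) \<Rightarrow> 'g list \<Rightarrow> 'g set" where
  "picks t h = (\<lambda>i. h ! i) ` {i. i < length h \<and> t i}"

lemma picks_Nil [simp]: "picks t [] = {}"
  by (simp add: picks_def)

lemma picks_snoc: "picks t (h @ [x]) = (if t (length h) then insert x (picks t h) else picks t h)"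
proof -
  have "{i. i < length (h @ [x]) \<and> t i} =
      {i. i < length h \<and> t i} \<union> (if t (length h) then {length h} else {})"
    by (auto simp: less_Suc_eq)
  moreover have "(\<lambda>i. (h @ [x]) ! i) ` {i. i < length h \<and> t i} = picks t h"
    unfolding picks_def by (rule image_cong) (auto simp: nth_append)
  ultimately show ?thesis
    by (simp add: picks_def image_Un)
qed

lemma picks_Un_picks_not: "picks t h \<union> picks (\<lambda>i. \<not> t i) h = set h"
proof -
  have "{i. i < length h \<and> t i} \<union> {i. i < length h \<and> \<not> t i} = {..<length h}"
    by auto
  then show ?thesis
    unfolding picks_def image_Un [symmetric] by (simp add: set_conv_nth image_def lessThan_def) blast
qed

lemma picks_disjoint: "distinct h \<Longrightarrow> picks t h \<inter> picks (\<lambda>i. \<not> t i) h = {}"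
proof -
  assume "distinct h"
  then have "inj_on (nth h) {..<length h}"
    by (simp add: inj_on_nth)
  then have "picks t h \<inter> picks (\<lambda>i. \<not> t i) h =
      nth h ` ({i. i < length h \<and> t i} \<inter> {i. i < length h \<and> \<not> t i})"
    unfolding picks_def by (rule inj_on_image_Int [symmetric]) auto
  also have "\<dots> = {}"
    by blast
  finally show ?thesis .
qed

definition winning_position :: "('g set \<Rightarrow> 'g set \<Rightarrow> bool) \<Rightarrow> 'g set \<Rightarrow> (nat \<Rightarrow> bool) \<Rightarrow> 'g list \<Rightarrow> bool"
  where "winning_position P G t h \<longleftrightarrow>
    can_force P (G - set h) (picks t h) (picks (\<lambda>i. \<not> t i) h) (t (length h))"

definition forcing_strategy :: "('g set \<Rightarrow> 'g set \<Rightarrow> bool) \<Rightarrow> 'g set \<Rightarrow> (nat \<Rightarrow> bool) \<Rightarrow> 'g list \<Rightarrow> 'g"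
  where "forcing_strategy P G t h =
    (if \<exists>g\<in>G - set h. winning_position P G t (h @ [g])
     then SOME g. g \<in> G - set h \<and> winning_position P G t (h @ [g])
     else SOME g. g \<in> G - set h)"

lemma valid_forcing_strategy: "valid_strategy G t (forcing_strategy P G t)"
  unfolding valid_strategy_def
proof (intro allI impI)
  fix h
  assume "distinct h \<and> set h \<subset> G \<and> t (length h)"
  then have "\<exists>g. g \<in> G - set h" by blast
  moreover have "(SOME g. g \<in> G - set h \<and> W g) \<in> G - set h" if "\<exists>g\<in>G - set h. W g" for W
    using someI_ex[of "\<lambda>g. g \<in> G - set h \<and> W g"] that by blast
  ultimately show "forcing_strategy P G t h \<in> G - set h"
    unfolding forcing_strategy_def using someI_ex[of "\<lambda>g. g \<in> G - set h"] by auto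
qed

lemma winning_position_snoc:
  assumes alt: "\<And>n. t (Suc n) \<longleftrightarrow> \<not> t n"
    and win: "winning_position P G t h" and x: "x \<in> G - set h"
    and own: "t (length h) \<Longrightarrow> x = forcing_strategy P G t h"
  shows "winning_position P G t (h @ [x])"
proof -
  have snoc: "winning_position P G t (h @ [g]) \<longleftrightarrow>
      can_force P (G - set h - {g})
        (if t (length h) then insert g (picks t h) else picks t h)
        (if t (length h) then picks (\<lambda>i. \<not> t i) h else insert g (picks (\<lambda>i. \<not> t i) h))
        (\<not> t (length h))" for g
  proof -
    have "G - set (h @ [g]) = G - set h - {g}"
      by auto
    then show ?thesis
      by (simp add: winning_position_def picks_snoc alt)
  qed
  show ?thesis
  proof (cases "t (length h)")
    case True
    with win have "can_force P (G - set h) (picks t h) (picks (\<lambda>i. \<not> t i) h) True"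
      by (simp add: winning_position_def)
    then obtain g where g: "g \<in> G - set h"
      and "can_force P (G - set h - {g}) (insert g (picks t h)) (picks (\<lambda>i. \<not> t i) h) False"
      using can_force_own_moveD x by blast
    with True have "\<exists>g\<in>G - set h. winning_position P G t (h @ [g])"
      by (auto simp: snoc)
    then have "winning_position P G t (h @ [forcing_strategy P G t h])"
      unfolding forcing_strategy_def
      using someI_ex[of "\<lambda>g. g \<in> G - set h \<and> winning_position P G t (h @ [g])"] by auto
    with own True show ?thesis by simp
  next
    case False
    with win have "can_force P (G - set h) (picks t h) (picks (\<lambda>i. \<not> t i) h) False"
      by (simp add: winning_position_def)
    then have "can_force P (G - set h - {x}) (picks t h) (insert x (picks (\<lambda>i. \<not> t i) h)) True"
      using x by (rule can_force_opp_moveD)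
    with False show ?thesis by (simp add: snoc)
  qed
qed

lemma forcing_strategy_wins:
  assumes alt: "\<And>n. t (Suc n) \<longleftrightarrow> \<not> t n"
    and play: "complete_play G p" "follows t (forcing_strategy P G t) p"
    and start: "k \<le> length p" "winning_position P G t (take k p)"
  shows "P (picks t p) (picks (\<lambda>i. \<not> t i) p)"
proof -
  from start(1) have "winning_position P G t (take (length p) p)"
  proof (induction rule: dec_induct)
    case base
    then show ?case using start(2) .
  next
    case (step n)
    have take: "take (Suc n) p = take n p @ [p ! n]"
      using step.hyps by (simp add: take_Suc_conv_app_nth)
    moreover have "p ! n \<in> G - set (take n p)"
      using play(1) step.hyps distinct_take[of p "Suc n"]
      by (auto simp: complete_play_def take)
    moreover have "t n \<Longrightarrow> p ! n = forcing_strategy P G t (take n p)"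
      using play(2) step.hyps by (simp add: follows_def)
    ultimately show ?case
      using winning_position_snoc[OF alt step.IH] step.hyps by simp
  qed
  then have "can_force P {} (picks t p) (picks (\<lambda>i. \<not> t i) p) (t (length p))"
    using play(1) by (simp add: winning_position_def complete_play_def)
  then show ?thesis by (rule can_force_finishedD)
qed

lemma uset_mono: "finite T \<Longrightarrow> S \<subseteq> T \<Longrightarrow> uset u a S \<le> uset u a T"
  unfolding uset_def by (rule sum_mono2) auto

definition weak_majority_prefers :: "'a set \<Rightarrow> ('a \<Rightarrow> 'g \<Rightarrow> nat) \<Rightarrow> 'g set \<Rightarrow> 'g set \<Rightarrow> bool"
  where "weak_majority_prefers A u X Y \<longleftrightarrow> card A \<le> 2 * card {a\<in>A. uset u a Y \<le> uset u a X}"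

definition strict_majority_prefers :: "'a set \<Rightarrow> ('a \<Rightarrow> 'g \<Rightarrow> nat) \<Rightarrow> 'g set \<Rightarrow> 'g set \<Rightarrow> bool"
  where "strict_majority_prefers A u X Y \<longleftrightarrow> card A < 2 * card {a\<in>A. uset u a Y < uset u a X}"

lemma strict_majority_prefers_if_not_weak:
  assumes "finite A" "\<not> weak_majority_prefers A u X Y"
  shows "strict_majority_prefers A u Y X"
proof -
  have "card {a\<in>A. uset u a Y \<le> uset u a X} + card {a\<in>A. uset u a X < uset u a Y} = card A"
    using assms(1) by (subst card_Un_disjoint [symmetric]) (auto intro: arg_cong[where f = card])
  then show ?thesis
    using assms(2) unfolding weak_majority_prefers_def strict_majority_prefers_def by linarith
qed

lemma strict_majority_prefers_asym:
  assumes "finite A" "strict_majority_prefers A u X Y"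
  shows "\<not> strict_majority_prefers A u Y X"
proof -
  have "card {a\<in>A. uset u a Y < uset u a X} + card {a\<in>A. uset u a X < uset u a Y}
      = card ({a\<in>A. uset u a Y < uset u a X} \<union> {a\<in>A. uset u a X < uset u a Y})"
    using assms(1) by (intro card_Un_disjoint [symmetric]) auto
  also have "\<dots> \<le> card A"
    using assms(1) by (intro card_mono) auto
  finally show ?thesis
    using assms(2) unfolding strict_majority_prefers_def by linarith
qed

lemma bundle_monotone_strict_majority_prefers:
  fixes u :: "'a \<Rightarrow> 'g \<Rightarrow> nat"
  assumes "finite A"
  shows "bundle_monotone (strict_majority_prefers A u)"
  unfolding bundle_monotone_def
proof (intro allI impI)
  fix X Y X' Y' :: "'g set"
  assume pref: "strict_majority_prefers A u X Y"
    and "X \<subseteq> X'" "finite X'" "Y' \<subseteq> Y" "finite Y"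
  then have "uset u a Y' < uset u a X'" if "uset u a Y < uset u a X" for a
    using uset_mono[of X' X u a] uset_mono[of Y Y' u a] that by linarith
  then have "card {a\<in>A. uset u a Y < uset u a X} \<le> card {a\<in>A. uset u a Y' < uset u a X'}"
    using assms by (intro card_mono) auto
  with pref show "strict_majority_prefers A u X' Y'"
    unfolding strict_majority_prefers_def by linarith
qed

theorem first_mover_forces_weak_majority:
  assumes "finite G" "finite A"
  shows "can_force (weak_majority_prefers A u) G {} {} True"
proof (rule ccontr)
  assume "\<not> ?thesis"
  then have "can_force (\<lambda>Y X. \<not> weak_majority_prefers A u X Y) G {} {} False"
    using can_force_determined[OF assms(1), of "weak_majority_prefers A u" "{}" "{}" True] by simp
  then have second: "can_force (strict_majority_prefers A u) G {} {} False"
    by (rule can_force_mono) (use assms(2) strict_majority_prefers_if_not_weak in blast)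
  then have "can_force (strict_majority_prefers A u) G {} {} True"
    using assms by (intro can_force_second_imp_first bundle_monotone_strict_majority_prefers) auto
  then obtain X Y where "strict_majority_prefers A u X Y" "strict_majority_prefers A u Y X"
    using can_force_against second by fastforce
  then show False
    using strict_majority_prefers_asym assms(2) by blast
qed

lemma EF1_for_insert_if_envy_free:
  assumes "finite Y" "uset u a Y \<le> uset u a X"
  shows "EF1_for u a X (insert x Y)"
proof -
  have "uset u a (insert x Y - {x}) \<le> uset u a Y"
    using assms(1) by (intro uset_mono) auto
  with assms(2) show ?thesis
    unfolding EF1_for_def by (intro exI[of _ "{x}"]) auto
qed

lemma EF1_majority_if_weak_majority:
  assumes "finite A" "finite Y" "weak_majority_prefers A u X Y"
  shows "card A \<le> 2 * card {a\<in>A. EF1_for u a X (insert x Y)}"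
proof -
  have "{a\<in>A. uset u a Y \<le> uset u a X} \<subseteq> {a\<in>A. EF1_for u a X (insert x Y)}"
    using EF1_for_insert_if_envy_free[OF assms(2)] by auto
  then have "card {a\<in>A. uset u a Y \<le> uset u a X} \<le> card {a\<in>A. EF1_for u a X (insert x Y)}"
    using assms(1) by (intro card_mono) auto
  with assms(3) show ?thesis
    unfolding weak_majority_prefers_def by linarith
qed

lemma MMS_fair_for_if_EF1_for:
  assumes "finite G" "\<forall>g. u a g \<le> 1" "X \<union> Y = G" "X \<inter> Y = {}" "EF1_for u a X Y"
  shows "MMS_fair_for u a G X"
proof -
  obtain C where C: "C \<subseteq> Y" "card C \<le> 1" "uset u a (Y - C) \<le> uset u a X"
    using assms(5) unfolding EF1_for_def by auto
  have fin: "finite X" "finite Y" "finite C"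
    using assms(1,3) C(1) finite_subset by auto
  have "uset u a C \<le> card C"
    unfolding uset_def using assms(2) sum_mono[of C "u a" "\<lambda>_. 1"] by simp
  moreover have "uset u a Y = uset u a (Y - C) + uset u a C"
    unfolding uset_def using fin C(1) by (metis Diff_partition sum.subset_diff)
  ultimately have Y_le: "uset u a Y \<le> uset u a X + 1"
    using C by linarith
  have split: "uset u a G = uset u a P1 + uset u a P2" if "P1 \<union> P2 = G" "P1 \<inter> P2 = {}" for P1 P2
    unfolding uset_def using that assms(1) by (metis finite_Un sum.union_disjoint)
  define S where "S = {min (uset u a P1) (uset u a P2) | P1 P2. P1 \<union> P2 = G \<and> P1 \<inter> P2 = {}}"
  have bound: "m \<le> uset u a X" if "m \<in> S" for m
  proof -
    obtain P1 P2 where "P1 \<union> P2 = G" "P1 \<inter> P2 = {}" "m = min (uset u a P1) (uset u a P2)"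
      using \<open>m \<in> S\<close> unfolding S_def by blast
    then show ?thesis
      using split[of P1 P2] split[OF assms(3,4)] Y_le by linarith
  qed
  then have "finite S"
    by (meson finite_atMost finite_subset subsetI atMost_iff)
  moreover have "S \<noteq> {}"
    unfolding S_def by blast
  ultimately show ?thesis
    using bound unfolding MMS_fair_for_def MMS_value_def S_def [symmetric] by simp
qed

lemma picked_by1_eq_picks: "picked_by1 p = picks even p"
  unfolding picked_by1_def picks_def by blast

lemma picked_by2_eq_picks: "picked_by2 p = picks odd p"
  unfolding picked_by2_def picks_def by blast

theorem group1_envy_free_majority_strategy:
  assumes "finite G" "finite A"
  shows "\<exists>s. valid_strategy G even s \<and>
    (\<forall>p. complete_play G p \<and> follows even s p \<longrightarrow>
       card A \<le> 2 * card {a\<in>A. envy_free_for u a (picked_by1 p) (picked_by2 p)})"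
proof (intro exI conjI allI impI)
  let ?P = "weak_majority_prefers A u"
  show "valid_strategy G even (forcing_strategy ?P G even)"
    by (rule valid_forcing_strategy)
  fix p
  assume "complete_play G p \<and> follows even (forcing_strategy ?P G even) p"
  moreover have "winning_position ?P G even (take 0 p)"
    using first_mover_forces_weak_majority[OF assms] by (simp add: winning_position_def)
  ultimately have "?P (picks even p) (picks odd p)"
    using forcing_strategy_wins[of even G p ?P 0] by auto
  then show "card A \<le> 2 * card {a\<in>A. envy_free_for u a (picked_by1 p) (picked_by2 p)}"
    by (simp add: weak_majority_prefers_def envy_free_for_def picked_by1_eq_picks picked_by2_eq_picks)
qed

theorem group2_EF1_majority_strategy:
  assumes "finite G" "finite A"
  shows "\<exists>s. valid_strategy G odd s \<and>
    (\<forall>p. complete_play G p \<and> follows odd s p \<longrightarrow>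
       card A \<le> 2 * card {a\<in>A. EF1_for u a (picked_by2 p) (picked_by1 p)})"
proof (intro exI conjI allI impI)
  define P where "P X Y \<longleftrightarrow> card A \<le> 2 * card {a\<in>A. EF1_for u a X Y}" for X Y
  show "valid_strategy G odd (forcing_strategy P G odd)"
    by (rule valid_forcing_strategy)
  fix p
  assume play: "complete_play G p \<and> follows odd (forcing_strategy P G odd) p"
  have "P (picks odd p) (picks even p)"
  proof (cases p)
    case Nil
    then show ?thesis
      by (simp add: P_def EF1_for_def uset_def)
  next
    case (Cons x q)
    have "weak_majority_prefers A u X Y \<Longrightarrow> P X (insert x Y)" if "finite Y" for X Y
      unfolding P_def using EF1_majority_if_weak_majority[OF assms(2) that] .
    then have "can_force P (G - {x}) {} {x} True"
      using can_force_insert_opp[OF first_mover_forces_weak_majority[of "G - {x}" A u]] assms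
      by auto
    moreover have "x \<in> G"
      using play Cons by (auto simp: complete_play_def)
    ultimately have "winning_position P G odd (take 1 p)"
      using Cons picks_snoc[of _ "[]" x] by (simp add: winning_position_def)
    then show ?thesis
      using forcing_strategy_wins[of odd G p P 1] play Cons by simp
  qed
  then show "card A \<le> 2 * card {a\<in>A. EF1_for u a (picked_by2 p) (picked_by1 p)}"
    by (simp add: P_def picked_by1_eq_picks picked_by2_eq_picks)
qed

lemma card_EF1_le_card_MMS_fair:
  assumes "finite G" "finite A" "binary_agents u A" "X \<union> Y = G" "X \<inter> Y = {}"
  shows "card {a\<in>A. EF1_for u a X Y} \<le> card {a\<in>A. MMS_fair_for u a G X}"
  using assms by (intro card_mono) (auto simp: binary_agents_def intro: MMS_fair_for_if_EF1_for)

lemma complete_play_partition: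
  assumes "complete_play G p"
  shows "picked_by2 p \<union> picked_by1 p = G" "picked_by2 p \<inter> picked_by1 p = {}"
  using assms picks_Un_picks_not[of odd p] picks_disjoint[of p odd]
  by (auto simp: complete_play_def picked_by1_eq_picks picked_by2_eq_picks)

theorem mainTheorem9:
  fixes G :: "'g set" and A1 A2 :: "'a set" and u :: "'a \<Rightarrow> 'g \<Rightarrow> nat"
  assumes "finite G" and "finite A1" and "finite A2"
    and "binary_agents u A1" and "binary_agents u A2"
  shows "(\<exists>s. valid_strategy G even s \<and>
            (\<forall>p. complete_play G p \<and> follows even s p \<longrightarrow>
               card A1 \<le> 2 * card {a\<in>A1. envy_free_for u a (picked_by1 p) (picked_by2 p)}))
       \<and> (\<exists>s. valid_strategy G odd s \<and>
            (\<forall>p. complete_play G p \<and> follows odd s p \<longrightarrow>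
               card A2 \<le> 2 * card {a\<in>A2. EF1_for u a (picked_by2 p) (picked_by1 p)} \<and>
               card A2 \<le> 2 * card {a\<in>A2. MMS_fair_for u a G (picked_by2 p)}))"
proof
  show "\<exists>s. valid_strategy G even s \<and>
            (\<forall>p. complete_play G p \<and> follows even s p \<longrightarrow>
               card A1 \<le> 2 * card {a\<in>A1. envy_free_for u a (picked_by1 p) (picked_by2 p)})"
    using group1_envy_free_majority_strategy[OF assms(1,2)] .
  obtain s where s: "valid_strategy G odd s"
    and EF1: "\<And>p. complete_play G p \<and> follows odd s p \<Longrightarrow>
      card A2 \<le> 2 * card {a\<in>A2. EF1_for u a (picked_by2 p) (picked_by1 p)}"
    using group2_EF1_majority_strategy[OF assms(1,3)] by blast
  have "card {a\<in>A2. EF1_for u a (picked_by2 p) (picked_by1 p)}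
      \<le> card {a\<in>A2. MMS_fair_for u a G (picked_by2 p)}" if "complete_play G p" for p
    using card_EF1_le_card_MMS_fair[OF assms(1,3,5) complete_play_partition[OF that]] .
  with s EF1 show "\<exists>s. valid_strategy G odd s \<and>
            (\<forall>p. complete_play G p \<and> follows odd s p \<longrightarrow>
               card A2 \<le> 2 * card {a\<in>A2. EF1_for u a (picked_by2 p) (picked_by1 p)} \<and>
               card A2 \<le> 2 * card {a\<in>A2. MMS_fair_for u a G (picked_by2 p)})"
    by (meson order.trans mult_le_mono2)
qed

end
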